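(* Fix $\alpha\in(0,1)$. Let $(P_i)_{i\ge0}$ be the $\alpha$-random walk and $X_i=1$ if $P_i$ is visible, $X_i=0$ otherwise. Then $$\mathbf V(X_1+\cdots+X_n)\ll n^{3/2}\log n,$$ with implied constant depending only on $\alpha$.
   Context: The $\alpha$-random walk: $P_0=(0,0)$ and $P_{i+1}=P_i+(1,0)$ with probability $\alpha$, $P_{i+1}=P_i+(0,1)$ with probability $1-\alpha$, independently. A lattice point $(a,b)$ is visible if $\gcd(a,b)=1$. $\mathbf V$ denotes variance. *)

theory Defs
  imports "HOL-Probability.Probability"
begin

text \<open>Steps of the alpha-random walk: step j is True (move (1,0)) with probability alpha,
  False (move (0,1)) with probability 1 - alpha, independently.\<close>

definition walk_steps :: "real \<Rightarrow> nat \<Rightarrow> (nat \<Rightarrow> bool) pmf" where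
  "walk_steps \<alpha> n = Pi_pmf {..<n} False (\<lambda>_. bernoulli_pmf \<alpha>)"

definition walk_pos :: "(nat \<Rightarrow> bool) \<Rightarrow> nat \<Rightarrow> nat \<times> nat" where
  "walk_pos \<omega> i = (card {j. j < i \<and> \<omega> j}, card {j. j < i \<and> \<not> \<omega> j})"

definition visible :: "nat \<times> nat \<Rightarrow> bool" where
  "visible p = (gcd (fst p) (snd p) = 1)"

definition vis_ind :: "(nat \<Rightarrow> bool) \<Rightarrow> nat \<Rightarrow> real" where
  "vis_ind \<omega> i = (if visible (walk_pos \<omega> i) then 1 else 0)"

end

theory Submission
  imports Defs "HOL-Computational_Algebra.Primes"
begin

text \<open>
  Let \<open>a\<^sub>i\<close> be the number of horizontal steps among the first \<open>i\<close>, so that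
  \<open>X\<^sub>i = [gcd(a\<^sub>i, i) = 1]\<close>. For \<open>i < j\<close> the counts \<open>a\<^sub>i\<close> and \<open>a\<^sub>j - a\<^sub>i\<close> are independent
  binomial variables, and inclusion-exclusion over the squarefree divisors \<open>d\<close> of \<open>j\<close> expresses
  the conditional probability of \<open>X\<^sub>j\<close> given \<open>a\<^sub>i = r\<close> through the probabilities that \<open>d\<close>
  divides \<open>r + Bin(j - i, \<alpha>)\<close>. Discrete Fourier analysis modulo \<open>d\<close> shows that these depend
  on the shift \<open>r\<close> only up to \<open>O(1/\<surd>(j - i))\<close>, whence \<open>Cov(X\<^sub>i, X\<^sub>j) = O(\<tau>(j)/\<surd>(j - i))\<close>.
  Summing over \<open>i < j \<le> n\<close> gives \<open>V \<le> n + O(\<surd>n \<Sum>\<^sub>j\<^sub>\<le>\<^sub>n \<tau>(j)) = O(n\<^sup>3\<^sup>/\<^sup>2 log n)\<close>.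
\<close>

lemma cos_ge_one_minus_half_square:
  fixes x :: real assumes "0 \<le> x" shows "1 - x^2/2 \<le> cos x"
proof -
  let ?f = "\<lambda>x::real. cos x - 1 + x^2/2"
  have "\<And>u. 0 \<le> u \<Longrightarrow> u \<le> x \<Longrightarrow> (?f has_real_derivative u - sin u) (at u)"
    by (auto intro!: derivative_eq_intros simp: field_simps)
  then have "?f 0 \<le> ?f x"
    by (intro DERIV_nonneg_imp_nondecreasing [OF assms]) (use sin_x_le_x in fastforce)
  then show ?thesis by simp
qed

lemma sin_ge_cubic:
  fixes x :: real assumes "0 \<le> x" shows "x - x^3/6 \<le> sin x"
proof -
  let ?f = "\<lambda>x::real. sin x - x + x^3/6"
  have "\<And>u. 0 \<le> u \<Longrightarrow> u \<le> x \<Longrightarrow> (?f has_real_derivative cos u - 1 + u^2/2) (at u)"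
    by (auto intro!: derivative_eq_intros simp: field_simps)
  then have "?f 0 \<le> ?f x"
    by (intro DERIV_nonneg_imp_nondecreasing [OF assms])
       (use cos_ge_one_minus_half_square in fastforce)
  then show ?thesis by simp
qed

lemma one_minus_cos_ge_square:
  fixes x :: real assumes "0 \<le> x" "x \<le> pi" shows "x^2/18 \<le> 1 - cos x"
proof -
  define y where "y = x/2"
  have y: "0 \<le> y" "y \<le> 2" using assms pi_less_4 by (auto simp: y_def)
  have "y * y^2 \<le> y * 2^2" using y by (intro mult_left_mono power_mono) auto
  then have "y/3 \<le> sin y" using sin_ge_cubic[OF y(1)] by (simp add: power3_eq_cube power2_eq_square)
  then have "(y/3)^2 \<le> sin y ^ 2" using y by (intro power_mono) auto
  moreover have "1 - cos x = 2 * sin y ^ 2" using cos_double_sin[of y] by (simp add: y_def)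
  ultimately show ?thesis by (simp add: y_def power_divide)
qed

lemma exp_neg_square_le:
  fixes u :: real assumes "0 \<le> u" shows "exp (- (u^2)) \<le> 2 / (1 + u)^2"
proof -
  have "exp (- (u^2)) = inverse (exp (u^2))" by (simp add: exp_minus)
  also have "\<dots> \<le> inverse (1 + u^2)"
    by (intro le_imp_inverse_le exp_ge_add_one_self) (simp add: add_pos_nonneg)
  also have "\<dots> = 2 / (2 * (1 + u^2))" by (simp add: divide_simps)
  also have "\<dots> \<le> 2 / (1 + u)^2"
    using zero_le_square[of "u - 1"] assms
    by (intro divide_left_mono) (auto simp: power2_eq_square algebra_simps add_pos_nonneg)
  finally show ?thesis .
qed

lemma sum_inverse_square_affine_telescope:
  fixes b :: real assumes "0 < b"
  shows "(\<Sum>t\<in>{1..<Suc N}. 1 / (1 + b * real t)^2) \<le> 1/b - 1 / (b * (1 + b * real N))"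
proof (induction N)
  case (Suc N)
  define x where "x = 1 + b * real N"
  have x: "0 < x" using assms by (simp add: x_def add_pos_nonneg)
  have "1 / (x + b)^2 \<le> 1 / (x * (x + b))"
    using x assms by (intro divide_left_mono) (auto simp: power2_eq_square intro!: mult_right_mono)
  also have "\<dots> = 1 / (b * x) - 1 / (b * (x + b))"
    using x assms by (simp add: divide_simps)
  finally show ?case
    using Suc by (simp add: x_def algebra_simps)
qed simp

lemma sum_inverse_square_affine_le:
  fixes b :: real assumes "0 < b" shows "(\<Sum>t\<in>{1..<d}. 1 / (1 + b * real t)^2) \<le> 1/b"
proof (cases d)
  case (Suc N)
  have "0 \<le> 1 / (b * (1 + b * real N))" using assms by simp
  then show ?thesis using sum_inverse_square_affine_telescope[OF assms, of N] unfolding Suc by linarith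
qed (use assms in simp)

lemma inverse_sqrt_le_diff: "1 / sqrt (real (Suc m)) \<le> 2 * (sqrt (Suc m) - sqrt m)"
proof -
  let ?s = "sqrt (real m)" and ?t = "sqrt (real (Suc m))"
  have "?s \<le> ?t" by simp
  then have "(?t - ?s) * (?t + ?s) \<le> (?t - ?s) * (2 * ?t)" by (intro mult_left_mono) auto
  moreover have "(?t - ?s) * (?t + ?s) = 1" by (simp add: algebra_simps)
  ultimately have "1 \<le> 2 * (?t - ?s) * ?t" by (simp add: algebra_simps)
  then show ?thesis by (simp add: divide_simps)
qed

lemma sum_inverse_sqrt_le: "(\<Sum>t=1..m. 1 / sqrt (real t)) \<le> 2 * sqrt (real m)"
proof -
  have "(\<Sum>t=1..m. 1 / sqrt (real t)) = (\<Sum>i<m. 1 / sqrt (real (Suc i)))"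
    by (simp add: sum.atLeast1_atMost_eq)
  also have "\<dots> \<le> (\<Sum>i<m. 2 * (sqrt (Suc i) - sqrt i))"
    by (intro sum_mono inverse_sqrt_le_diff)
  also have "\<dots> = 2 * (\<Sum>i<m. sqrt (Suc i) - sqrt i)"
    by (simp add: sum_distrib_left)
  also have "\<dots> = 2 * sqrt m"
    by (simp only: sum_lessThan_telescope[of "\<lambda>i. sqrt (real i)"]) simp
  finally show ?thesis .
qed

section \<open>Shifted binomial distributions modulo d\<close>

lemma cis_2pi_frac_eq_1_iff:
  assumes "0 < d" shows "cis (2 * pi * real m / real d) = 1 \<longleftrightarrow> d dvd m"
proof
  assume "cis (2 * pi * real m / real d) = 1"
  then have "cos (2 * pi * real m / real d) = 1" by (simp add: complex_eq_iff)
  then obtain c :: int where "2 * pi * real m / real d = c * 2 * pi" by (auto simp: cos_one_2pi_int)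
  then have "real m = real_of_int c * real d" using assms by (simp add: field_simps)
  then have "int m = c * int d" by (metis of_int_eq_iff of_int_mult of_int_of_nat_eq)
  then show "d dvd m" by (metis dvd_triv_right int_dvd_int_iff)
next
  assume "d dvd m"
  then obtain c where "m = d * c" by blast
  then have "2 * pi * real m / real d = 2 * pi * real c" using assms by simp
  then show "cis (2 * pi * real m / real d) = 1" by simp
qed

lemma sum_roots_unity_power:
  assumes "0 < d"
  shows "(\<Sum>t<d. cis (2 * pi * real t / real d) ^ m) = (if d dvd m then of_nat d else 0)"
proof -
  define \<omega> where "\<omega> = cis (2 * pi * real m / real d)"
  have power_swap: "cis (2 * pi * real t / real d) ^ m = \<omega> ^ t" for t
    unfolding \<omega>_def Complex.DeMoivre by (rule arg_cong[of _ _ cis]) simp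
  have "\<omega> ^ d = 1" using assms by (simp add: \<omega>_def Complex.DeMoivre)
  moreover have "\<omega> = 1 \<longleftrightarrow> d dvd m" using cis_2pi_frac_eq_1_iff[OF assms] by (simp add: \<omega>_def)
  ultimately show ?thesis by (cases "d dvd m") (simp_all add: power_swap geometric_sum)
qed

lemma of_bool_dvd_fourier:
  assumes "0 < d"
  shows "of_bool (d dvd m) = (1 / of_nat d) * (\<Sum>t<d. cis (2 * pi * real t / real d) ^ m)"
  using assms by (simp add: sum_roots_unity_power)

text \<open>For \<open>B \<sim> Bin(k, a)\<close>: \<open>binomial_weight a k b = P(B = b)\<close>, \<open>binomial_dvd_prob a k d r = P(d dvd r + B)\<close>,
  and \<open>bernoulli_char a d t\<close> is the characteristic function of a Bernoulli(\<open>a\<close>) step at the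
  frequency \<open>2\<pi>t/d\<close>, so that its \<open>k\<close>-th power is that of \<open>B\<close>.\<close>

definition binomial_weight :: "real \<Rightarrow> nat \<Rightarrow> nat \<Rightarrow> real" where
  "binomial_weight a k b = real (k choose b) * a ^ b * (1 - a) ^ (k - b)"

definition binomial_dvd_prob :: "real \<Rightarrow> nat \<Rightarrow> nat \<Rightarrow> nat \<Rightarrow> real" where
  "binomial_dvd_prob a k d r = (\<Sum>b\<le>k. binomial_weight a k b * of_bool (d dvd r + b))"

definition bernoulli_char :: "real \<Rightarrow> nat \<Rightarrow> nat \<Rightarrow> complex" where
  "bernoulli_char a d t = of_real (1 - a) + of_real a * cis (2 * pi * real t / real d)"

lemma sum_binomial_weight: "0 \<le> a \<Longrightarrow> a \<le> 1 \<Longrightarrow> (\<Sum>b\<le>k. binomial_weight a k b) = 1"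
  using binomial_ring[of a "1 - a" k] by (simp add: binomial_weight_def)

lemma binomial_weight_nonneg: "0 \<le> a \<Longrightarrow> a \<le> 1 \<Longrightarrow> 0 \<le> binomial_weight a k b"
  by (simp add: binomial_weight_def)

lemma sum_binomial_weight_power:
  fixes z :: complex
  shows "(\<Sum>b\<le>k. of_real (binomial_weight a k b) * z ^ b) = (of_real a * z + of_real (1 - a)) ^ k"
  by (subst binomial_ring) (intro sum.cong refl, simp add: binomial_weight_def power_mult_distrib)

lemma binomial_dvd_prob_fourier:
  assumes "0 < d"
  shows "of_real (binomial_dvd_prob a k d r) =
    (1 / of_nat d) * (\<Sum>t<d. cis (2 * pi * real t / real d) ^ r * bernoulli_char a d t ^ k)"
proof -
  let ?\<zeta> = "\<lambda>t. cis (2 * pi * real t / real d)"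
  have "of_real (binomial_dvd_prob a k d r) =
      (\<Sum>b\<le>k. of_real (binomial_weight a k b) * ((1 / of_nat d) * (\<Sum>t<d. ?\<zeta> t ^ (r + b))))"
    unfolding binomial_dvd_prob_def of_bool_dvd_fourier[OF assms, symmetric] by simp
  also have "\<dots> = (1 / of_nat d) *
      (\<Sum>t<d. ?\<zeta> t ^ r * (\<Sum>b\<le>k. of_real (binomial_weight a k b) * ?\<zeta> t ^ b))"
    by (simp add: sum_distrib_left sum_distrib_right sum.swap[of _ "{..<d}"] power_add mult_ac)
  also have "\<dots> = (1 / of_nat d) * (\<Sum>t<d. ?\<zeta> t ^ r * bernoulli_char a d t ^ k)"
    by (simp add: sum_binomial_weight_power bernoulli_char_def add.commute)
  finally show ?thesis .
qed

lemma norm_bernoulli_char_squared: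
  "cmod (bernoulli_char a d t) ^ 2 = 1 - 2 * a * (1 - a) * (1 - cos (2 * pi * real t / real d))"
proof -
  let ?\<theta> = "2 * pi * real t / real d"
  have "cmod (bernoulli_char a d t) ^ 2 = ((1 - a) + a * cos ?\<theta>)^2 + a^2 * (sin ?\<theta>)^2"
    by (simp add: bernoulli_char_def cmod_power2 power_mult_distrib)
  also have "\<dots> = 1 - 2 * a * (1 - a) * (1 - cos ?\<theta>)"
    by (simp only: sin_squared_eq) (simp add: power2_eq_square algebra_simps)
  finally show ?thesis .
qed

lemma norm_bernoulli_char_reflect:
  assumes "t \<le> d" shows "cmod (bernoulli_char a d (d - t)) = cmod (bernoulli_char a d t)"
proof -
  have "cos (2 * pi * real (d - t) / real d) = cos (2 * pi * real t / real d)"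
  proof (cases "d = 0")
    case False
    then have "2 * pi * real (d - t) / real d = 2 * pi - 2 * pi * real t / real d"
      using assms by (simp add: of_nat_diff field_simps)
    then show ?thesis by (simp add: cos_diff)
  qed simp
  then have "cmod (bernoulli_char a d (d - t)) ^ 2 = cmod (bernoulli_char a d t) ^ 2"
    by (simp add: norm_bernoulli_char_squared)
  then show ?thesis by (simp add: power2_eq_iff_nonneg)
qed

lemma norm_bernoulli_char_le_exp:
  assumes a: "0 \<le> a" "a \<le> 1" and "0 < d" "2 * t \<le> d"
  shows "cmod (bernoulli_char a d t) \<le> exp (- (2 * a * (1 - a) * (real t / real d)^2))"
proof -
  define \<beta> where "\<beta> = a * (1 - a)"
  define \<theta> where "\<theta> = 2 * pi * real t / real d"
  have \<beta>: "0 \<le> \<beta>" using a by (simp add: \<beta>_def)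
  have "\<theta> \<le> pi"
    using assms pi_gt3 by (simp add: \<theta>_def divide_le_eq)
  then have "\<theta>^2/18 \<le> 1 - cos \<theta>" by (intro one_minus_cos_ge_square) (simp add: \<theta>_def)
  moreover have "2 * (real t / real d)^2 \<le> \<theta>^2/18"
  proof -
    have "3^2 \<le> pi^2" using pi_gt3 by (intro power_mono) auto
    then show ?thesis by (simp add: \<theta>_def power_divide power_mult_distrib divide_simps mult_right_mono)
  qed
  ultimately have "2 * \<beta> * (2 * (real t / real d)^2) \<le> 2 * \<beta> * (1 - cos \<theta>)"
    using \<beta> by (intro mult_left_mono) auto
  then have "cmod (bernoulli_char a d t) ^ 2 \<le> 1 + (- (4 * \<beta> * (real t / real d)^2))"
    by (simp add: norm_bernoulli_char_squared \<beta>_def \<theta>_def)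
  also have "\<dots> \<le> exp (- (4 * \<beta> * (real t / real d)^2))"
    by (rule exp_ge_add_one_self)
  also have "\<dots> = exp (- (2 * \<beta> * (real t / real d)^2)) ^ 2"
    by (simp add: power2_eq_square flip: exp_add)
  finally have "cmod (bernoulli_char a d t) \<le> exp (- (2 * \<beta> * (real t / real d)^2))"
    by (rule power2_le_imp_le) simp
  then show ?thesis by (simp add: \<beta>_def mult.assoc)
qed

lemma norm_bernoulli_char_power_le_half:
  assumes "0 \<le> a" "a \<le> 1" and "0 < d" "2 * t \<le> d"
  shows "cmod (bernoulli_char a d t) ^ k \<le> 2 / (1 + sqrt (2 * a * (1 - a) * real k) * real t / real d)^2"
proof -
  define u where "u = sqrt (2 * a * (1 - a) * real k) * real t / real d"
  have u: "0 \<le> u" using assms by (simp add: u_def)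
  have "u^2 = real k * (2 * a * (1 - a) * (real t / real d)^2)"
    using assms by (simp add: u_def power_mult_distrib power_divide)
  then have "exp (- (2 * a * (1 - a) * (real t / real d)^2)) ^ k = exp (- (u^2))"
    by (simp flip: exp_of_nat_mult)
  then have "cmod (bernoulli_char a d t) ^ k \<le> exp (- (u^2))"
    using norm_bernoulli_char_le_exp[OF assms] by (metis norm_ge_zero power_mono)
  also have "\<dots> \<le> 2 / (1 + u)^2" by (rule exp_neg_square_le[OF u])
  finally show ?thesis by (simp add: u_def)
qed

lemma norm_bernoulli_char_power_le:
  fixes k :: nat
  assumes "0 \<le> a" "a \<le> 1" and "t < d"
  defines "b \<equiv> sqrt (2 * a * (1 - a) * real k) / real d"
  shows "cmod (bernoulli_char a d t) ^ k \<le> 2 / (1 + b * real t)^2 + 2 / (1 + b * real (d - t))^2"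
proof (cases "2 * t \<le> d")
  case True
  then have "cmod (bernoulli_char a d t) ^ k \<le> 2 / (1 + b * real t)^2"
    using norm_bernoulli_char_power_le_half[of a d t k] assms by (simp add: b_def)
  then show ?thesis by (rule add_increasing2[rotated]) simp
next
  case False
  then have "cmod (bernoulli_char a d (d - t)) ^ k \<le> 2 / (1 + b * real (d - t))^2"
    using norm_bernoulli_char_power_le_half[of a d "d - t" k] assms by (simp add: b_def)
  moreover have "cmod (bernoulli_char a d (d - t)) = cmod (bernoulli_char a d t)"
    using norm_bernoulli_char_reflect[of "d - t" d a] assms by simp
  ultimately have "cmod (bernoulli_char a d t) ^ k \<le> 2 / (1 + b * real (d - t))^2" by simp
  then show ?thesis by (rule add_increasing[rotated]) simp
qed

lemma binomial_dvd_prob_diff_fourier: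
  assumes d: "0 < d"
  defines "\<zeta> t \<equiv> cis (2 * pi * real t / real d)"
  shows "of_real (binomial_dvd_prob a k d r - binomial_dvd_prob a k d r') =
    (1 / of_nat d) * (\<Sum>t\<in>{1..<d}. (\<zeta> t ^ r - \<zeta> t ^ r') * bernoulli_char a d t ^ k)"
proof -
  have "of_real (binomial_dvd_prob a k d r - binomial_dvd_prob a k d r') =
      (1 / of_nat d) * (\<Sum>t<d. (\<zeta> t ^ r - \<zeta> t ^ r') * bernoulli_char a d t ^ k)"
    unfolding of_real_diff binomial_dvd_prob_fourier[OF d]
    by (simp add: \<zeta>_def sum_subtractf left_diff_distrib diff_divide_distrib)
  also have "{..<d} = insert 0 {1..<d}" using d by auto
  finally show ?thesis by (simp add: \<zeta>_def)
qed

lemma binomial_dvd_prob_oscillation: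
  assumes a: "0 < a" "a < 1" and d: "0 < d" and k: "0 < k"
  shows "\<bar>binomial_dvd_prob a k d r - binomial_dvd_prob a k d r'\<bar> \<le> 8 / sqrt (2 * a * (1 - a) * real k)"
proof -
  define b where "b = sqrt (2 * a * (1 - a) * real k) / real d"
  define g where "g t = 1 / (1 + b * real t)^2" for t
  define \<zeta> where "\<zeta> t = cis (2 * pi * real t / real d)" for t
  have b: "0 < b" using a d k by (simp add: b_def)
  have "\<bar>binomial_dvd_prob a k d r - binomial_dvd_prob a k d r'\<bar> =
      norm (complex_of_real (binomial_dvd_prob a k d r - binomial_dvd_prob a k d r'))"
    by (simp only: norm_of_real)
  also have "\<dots> = (1 / real d) * norm (\<Sum>t\<in>{1..<d}. (\<zeta> t ^ r - \<zeta> t ^ r') * bernoulli_char a d t ^ k)"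
    unfolding binomial_dvd_prob_diff_fourier[OF d] by (simp add: \<zeta>_def norm_divide)
  also have "\<dots> \<le> (1 / real d) * (\<Sum>t\<in>{1..<d}. 2 * (2 * g t + 2 * g (d - t)))"
  proof (intro mult_left_mono order.trans[OF norm_sum] sum_mono)
    fix t assume t: "t \<in> {1..<d}"
    have "norm (\<zeta> t ^ r - \<zeta> t ^ r') \<le> 2"
      using norm_triangle_ineq4[of "\<zeta> t ^ r" "\<zeta> t ^ r'"] by (simp add: \<zeta>_def norm_power)
    moreover have "norm (bernoulli_char a d t ^ k) \<le> 2 * g t + 2 * g (d - t)"
      using norm_bernoulli_char_power_le[of a t d k] a t by (simp add: b_def g_def norm_power)
    ultimately show "norm ((\<zeta> t ^ r - \<zeta> t ^ r') * bernoulli_char a d t ^ k) \<le> 2 * (2 * g t + 2 * g (d - t))"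
      unfolding norm_mult by (intro mult_mono) auto
  qed simp
  also have "(\<Sum>t\<in>{1..<d}. 2 * (2 * g t + 2 * g (d - t))) = 8 * sum g {1..<d}"
  proof -
    have "(\<Sum>t\<in>{1..<d}. g (d - t)) = sum g {1..<d}"
      using sum.atLeastLessThan_rev[of g 1 d] by simp
    then show ?thesis by (simp add: sum.distrib flip: sum_distrib_left)
  qed
  also have "(1 / real d) * (8 * sum g {1..<d}) \<le> (1 / real d) * (8 * (1 / b))"
    using sum_inverse_square_affine_le[OF b, of d] by (intro mult_left_mono) (auto simp: g_def)
  also have "\<dots> = 8 / sqrt (2 * a * (1 - a) * real k)"
    using d by (simp add: b_def)
  finally show ?thesis .
qed

section \<open>Coprimality by inclusion-exclusion\<close>

lemma coprime_iff_no_prime_factor_dvd: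
  fixes x j :: nat assumes "j \<noteq> 0"
  shows "coprime x j \<longleftrightarrow> (\<forall>p\<in>prime_factors j. \<not> p dvd x)"
proof
  assume "coprime x j"
  then show "\<forall>p\<in>prime_factors j. \<not> p dvd x"
    by (auto simp: in_prime_factors_iff dest: coprime_common_divisor)
next
  assume no_factor: "\<forall>p\<in>prime_factors j. \<not> p dvd x"
  show "coprime x j"
  proof (rule ccontr)
    assume "\<not> coprime x j"
    then obtain p where "prime p" "p dvd gcd x j"
      using prime_factor_nat[of "gcd x j"] by (auto simp: coprime_iff_gcd_eq_1)
    then show False using no_factor assms by (auto simp: in_prime_factors_iff)
  qed
qed

lemma prod_primes_dvd_iff:
  fixes x :: nat assumes "finite S" "\<forall>p\<in>S. prime p"
  shows "\<Prod>S dvd x \<longleftrightarrow> (\<forall>p\<in>S. p dvd x)"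
  using assms
proof (induction S rule: finite_induct)
  case (insert p S)
  then have "coprime p (\<Prod>S)" by (intro prod_coprime_right primes_coprime) auto
  with insert show ?case by (auto simp: divides_mult dest: dvd_mult_left dvd_mult_right)
qed simp

lemma prod_of_bool:
  "finite A \<Longrightarrow> (\<Prod>x\<in>A. of_bool (P x)) = (of_bool (\<forall>x\<in>A. P x) :: 'a :: comm_semiring_1)"
  by (induction A rule: finite_induct) auto

lemma of_bool_coprime_inclusion_exclusion:
  fixes x j :: nat assumes "j \<noteq> 0"
  shows "of_bool (coprime x j) =
    (\<Sum>S\<in>Pow (prime_factors j). (-1) ^ card S * (of_bool (\<Prod>S dvd x) :: real))"
proof -
  have "of_bool (coprime x j) = (\<Prod>p\<in>prime_factors j. 1 - (of_bool (p dvd x) :: real))"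
    by (simp add: coprime_iff_no_prime_factor_dvd[OF assms] prod_of_bool[symmetric] of_bool_def)
  also have "\<dots> = (\<Sum>S\<in>Pow (prime_factors j). (-1) ^ card S * (\<Prod>p\<in>S. of_bool (p dvd x)))"
    by (simp add: prod_diff_conv_sum)
  also have "\<dots> = (\<Sum>S\<in>Pow (prime_factors j). (-1) ^ card S * of_bool (\<Prod>S dvd x))"
  proof (intro sum.cong refl)
    fix S assume "S \<in> Pow (prime_factors j)"
    then have S: "finite S" "\<forall>p\<in>S. prime p"
      by (auto intro: finite_subset simp: in_prime_factors_iff)
    then show "(-1) ^ card S * (\<Prod>p\<in>S. of_bool (p dvd x)) = (-1) ^ card S * (of_bool (\<Prod>S dvd x) :: real)"
      by (simp add: prod_of_bool prod_primes_dvd_iff)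
  qed
  finally show ?thesis .
qed

lemma card_Pow_prime_factors_le:
  fixes j :: nat assumes "j \<noteq> 0"
  shows "card (Pow (prime_factors j)) \<le> card {d. d dvd j}"
proof (rule card_inj_on_le)
  show "inj_on Prod (Pow (prime_factors j))"
    by (rule inj_on_Prod_primes) (auto intro: finite_subset simp: in_prime_factors_iff)
  show "Prod ` Pow (prime_factors j) \<subseteq> {d. d dvd j}"
  proof clarify
    fix S assume "S \<subseteq> prime_factors j"
    then show "\<Prod>S dvd j"
      using prod_primes_dvd_iff[of S j] by (auto intro: finite_subset simp: in_prime_factors_iff)
  qed
  show "finite {d. d dvd j}" using assms by (simp add: finite_divisors_nat)
qed

definition binomial_coprime_prob :: "real \<Rightarrow> nat \<Rightarrow> nat \<Rightarrow> nat \<Rightarrow> real" where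
  "binomial_coprime_prob a k j r = (\<Sum>b\<le>k. binomial_weight a k b * of_bool (coprime (r + b) j))"

lemma binomial_coprime_prob_inclusion_exclusion:
  assumes "j \<noteq> 0"
  shows "binomial_coprime_prob a k j r =
    (\<Sum>S\<in>Pow (prime_factors j). (-1) ^ card S * binomial_dvd_prob a k (\<Prod>S) r)"
  unfolding binomial_coprime_prob_def binomial_dvd_prob_def of_bool_coprime_inclusion_exclusion[OF assms]
  by (simp only: sum_distrib_left) (subst sum.swap, simp only: mult_ac)

lemma binomial_coprime_prob_oscillation:
  assumes a: "0 < a" "a < 1" and j: "0 < j" and k: "0 < k"
  shows "\<bar>binomial_coprime_prob a k j r - binomial_coprime_prob a k j r'\<bar>
    \<le> real (card {d. d dvd j}) * (8 / sqrt (2 * a * (1 - a) * real k))"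
proof -
  let ?\<epsilon> = "8 / sqrt (2 * a * (1 - a) * real k)"
  have "\<bar>binomial_coprime_prob a k j r - binomial_coprime_prob a k j r'\<bar> =
      \<bar>\<Sum>S\<in>Pow (prime_factors j). (-1) ^ card S * (binomial_dvd_prob a k (\<Prod>S) r - binomial_dvd_prob a k (\<Prod>S) r')\<bar>"
    using j by (simp add: binomial_coprime_prob_inclusion_exclusion sum_subtractf right_diff_distrib)
  also have "\<dots> \<le> (\<Sum>S\<in>Pow (prime_factors j). ?\<epsilon>)"
  proof (intro order.trans[OF sum_abs] sum_mono)
    fix S assume "S \<in> Pow (prime_factors j)"
    then have "0 < \<Prod>S"
      by (intro prod_pos) (auto simp: in_prime_factors_iff prime_gt_0_nat)
    then show "\<bar>(-1) ^ card S * (binomial_dvd_prob a k (\<Prod>S) r - binomial_dvd_prob a k (\<Prod>S) r')\<bar> \<le> ?\<epsilon>"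
      using binomial_dvd_prob_oscillation[OF a _ k] by (simp add: abs_mult)
  qed
  also have "\<dots> = real (card (Pow (prime_factors j))) * ?\<epsilon>" by simp
  also have "\<dots> \<le> real (card {d. d dvd j}) * ?\<epsilon>"
    using card_Pow_prime_factors_le[of j] j a by (intro mult_right_mono) simp_all
  finally show ?thesis .
qed

definition pmf_covariance :: "'a pmf \<Rightarrow> ('a \<Rightarrow> real) \<Rightarrow> ('a \<Rightarrow> real) \<Rightarrow> real" where
  "pmf_covariance M X Y =
    measure_pmf.expectation M (\<lambda>\<omega>. X \<omega> * Y \<omega>) - measure_pmf.expectation M X * measure_pmf.expectation M Y"

lemma variance_sum_eq_sum_covariance:
  fixes X :: "'i \<Rightarrow> 'a \<Rightarrow> real"
  assumes M: "finite (set_pmf M)" and I: "finite I"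
  shows "measure_pmf.variance M (\<lambda>\<omega>. \<Sum>i\<in>I. X i \<omega>) = (\<Sum>i\<in>I. \<Sum>j\<in>I. pmf_covariance M (X i) (X j))"
proof -
  let ?E = "measure_pmf.expectation M"
  have int: "integrable M f" for f :: "'a \<Rightarrow> real" by (rule integrable_measure_pmf_finite[OF M])
  have "measure_pmf.variance M (\<lambda>\<omega>. \<Sum>i\<in>I. X i \<omega>) = ?E (\<lambda>\<omega>. (\<Sum>i\<in>I. X i \<omega>)^2) - (?E (\<lambda>\<omega>. \<Sum>i\<in>I. X i \<omega>))^2"
    by (rule measure_pmf.variance_eq) (rule int)+
  also have "\<dots> = (\<Sum>i\<in>I. \<Sum>j\<in>I. ?E (\<lambda>\<omega>. X i \<omega> * X j \<omega>)) - (\<Sum>i\<in>I. \<Sum>j\<in>I. ?E (X i) * ?E (X j))"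
    by (simp add: power2_eq_square sum_product int)
  also have "\<dots> = (\<Sum>i\<in>I. \<Sum>j\<in>I. pmf_covariance M (X i) (X j))"
    by (simp add: pmf_covariance_def sum_subtractf)
  finally show ?thesis .
qed

lemma abs_pmf_covariance_le_1:
  fixes X Y :: "'a \<Rightarrow> real"
  assumes "\<And>\<omega>. 0 \<le> X \<omega> \<and> X \<omega> \<le> 1" "\<And>\<omega>. 0 \<le> Y \<omega> \<and> Y \<omega> \<le> 1"
  shows "\<bar>pmf_covariance M X Y\<bar> \<le> 1"
proof -
  have unit: "0 \<le> measure_pmf.expectation M f \<and> measure_pmf.expectation M f \<le> 1"
    if "\<And>\<omega>. 0 \<le> f \<omega> \<and> f \<omega> \<le> 1" for f :: "'a \<Rightarrow> real"
  proof
    show "0 \<le> measure_pmf.expectation M f" using that by (intro integral_nonneg_AE) auto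
    have "measure_pmf.expectation M f \<le> measure_pmf.expectation M (\<lambda>_. 1)"
      using that by (intro integral_mono_AE' measure_pmf.integrable_const) auto
    then show "measure_pmf.expectation M f \<le> 1" by simp
  qed
  have "0 \<le> X \<omega> * Y \<omega> \<and> X \<omega> * Y \<omega> \<le> 1" for \<omega>
    using assms[of \<omega>] by (auto intro: mult_le_one)
  then have "0 \<le> measure_pmf.expectation M (\<lambda>\<omega>. X \<omega> * Y \<omega>) \<and> measure_pmf.expectation M (\<lambda>\<omega>. X \<omega> * Y \<omega>) \<le> 1"
    by (rule unit)
  moreover have "0 \<le> measure_pmf.expectation M X * measure_pmf.expectation M Y \<and>
      measure_pmf.expectation M X * measure_pmf.expectation M Y \<le> 1"
    using unit[OF assms(1)] unit[OF assms(2)] by (auto intro: mult_le_one)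
  ultimately show ?thesis unfolding pmf_covariance_def by linarith
qed

lemma abs_diff_weighted_mean_le:
  assumes "\<And>a. a \<in> A \<Longrightarrow> 0 \<le> P a" "sum P A = 1"
    and "\<And>a'. a' \<in> A \<Longrightarrow> \<bar>h a - h a'\<bar> \<le> (\<epsilon> :: real)"
  shows "\<bar>h a - (\<Sum>a'\<in>A. P a' * h a')\<bar> \<le> \<epsilon>"
proof -
  have "h a - (\<Sum>a'\<in>A. P a' * h a') = (\<Sum>a'\<in>A. P a' * (h a - h a'))"
    using assms(2) by (simp add: right_diff_distrib sum_subtractf flip: sum_distrib_right)
  also have "\<bar>\<dots>\<bar> \<le> (\<Sum>a'\<in>A. P a' * \<epsilon>)"
    using assms(1,3) by (intro order.trans[OF sum_abs] sum_mono) (simp add: abs_mult mult_left_mono)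
  finally show ?thesis using assms(2) by (simp flip: sum_distrib_right)
qed

lemma abs_covariance_le_oscillation:
  fixes P Q f :: "nat \<Rightarrow> real" and G :: "nat \<Rightarrow> nat \<Rightarrow> real"
  assumes P: "\<And>a. a \<in> A \<Longrightarrow> 0 \<le> P a" "sum P A = 1" and Q: "sum Q B = 1"
    and f: "\<And>a. a \<in> A \<Longrightarrow> 0 \<le> f a \<and> f a \<le> 1"
    and osc: "\<And>a a'. a \<in> A \<Longrightarrow> a' \<in> A \<Longrightarrow> \<bar>(\<Sum>b\<in>B. Q b * G a b) - (\<Sum>b\<in>B. Q b * G a' b)\<bar> \<le> \<epsilon>"
  shows "\<bar>(\<Sum>a\<in>A. \<Sum>b\<in>B. P a * Q b * (f a * G a b)) -
          (\<Sum>a\<in>A. \<Sum>b\<in>B. P a * Q b * f a) * (\<Sum>a\<in>A. \<Sum>b\<in>B. P a * Q b * G a b)\<bar> \<le> \<epsilon>"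
proof -
  define h where "h a = (\<Sum>b\<in>B. Q b * G a b)" for a
  define m where "m = (\<Sum>a\<in>A. P a * h a)"
  have "(\<Sum>a\<in>A. \<Sum>b\<in>B. P a * Q b * (f a * G a b)) = (\<Sum>a\<in>A. P a * f a * h a)"
    unfolding h_def by (simp add: sum_distrib_left mult_ac)
  moreover have "(\<Sum>a\<in>A. \<Sum>b\<in>B. P a * Q b * f a) = (\<Sum>a\<in>A. P a * f a)"
    using Q by (simp add: mult.commute[of "P _"] mult.assoc flip: sum_distrib_left sum_distrib_right)
  moreover have "(\<Sum>a\<in>A. \<Sum>b\<in>B. P a * Q b * G a b) = m"
    unfolding m_def h_def by (simp add: sum_distrib_left mult_ac)
  moreover have "(\<Sum>a\<in>A. P a * f a * h a) - (\<Sum>a\<in>A. P a * f a) * m = (\<Sum>a\<in>A. P a * f a * (h a - m))"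
    by (simp add: sum_distrib_right sum_subtractf right_diff_distrib)
  moreover have "\<bar>\<Sum>a\<in>A. P a * f a * (h a - m)\<bar> \<le> (\<Sum>a\<in>A. P a * \<epsilon>)"
  proof (intro order.trans[OF sum_abs] sum_mono)
    fix a assume a: "a \<in> A"
    have "\<bar>h a - m\<bar> \<le> \<epsilon>"
      unfolding m_def h_def using P osc[OF a] by (rule abs_diff_weighted_mean_le)
    then have "f a * \<bar>h a - m\<bar> \<le> 1 * \<epsilon>" using f[OF a] by (intro mult_mono) auto
    then show "\<bar>P a * f a * (h a - m)\<bar> \<le> P a * \<epsilon>"
      using mult_left_mono[OF _ P(1)[OF a]] P(1)[OF a] f[OF a] by (simp add: abs_mult mult.assoc)
  qed
  ultimately show ?thesis using P(2) by (simp flip: sum_distrib_right)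
qed

section \<open>The random walk\<close>

lemma fst_walk_pos_le: "fst (walk_pos \<omega> i) \<le> i"
proof -
  have "card {j. j < i \<and> \<omega> j} \<le> card {..<i}" by (intro card_mono) auto
  then show ?thesis by (simp add: walk_pos_def)
qed

lemma snd_walk_pos: "snd (walk_pos \<omega> i) = i - fst (walk_pos \<omega> i)"
proof -
  have "{j. j < i \<and> \<not> \<omega> j} = {..<i} - {j. j < i \<and> \<omega> j}" by auto
  then show ?thesis
    using card_Diff_subset[of "{j. j < i \<and> \<omega> j}" "{..<i}"] by (auto simp: walk_pos_def)
qed

lemma vis_ind_eq_coprime: "vis_ind \<omega> i = of_bool (coprime (fst (walk_pos \<omega> i)) i)"
proof -
  have "gcd (fst (walk_pos \<omega> i)) (i - fst (walk_pos \<omega> i)) = gcd (fst (walk_pos \<omega> i)) i"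
    using fst_walk_pos_le by (metis gcd.commute gcd_diff1_nat)
  then show ?thesis by (simp add: vis_ind_def visible_def snd_walk_pos coprime_iff_gcd_eq_1)
qed

lemma fst_walk_pos_mono:
  assumes "i \<le> j" shows "fst (walk_pos \<omega> i) \<le> fst (walk_pos \<omega> j)"
proof -
  have "{l. l < i \<and> \<omega> l} \<subseteq> {l. l < j \<and> \<omega> l}" using assms by auto
  then show ?thesis by (simp add: walk_pos_def card_mono)
qed

lemma walk_steps_restrict:
  assumes "j \<le> n"
  shows "map_pmf (\<lambda>\<omega> x. if x \<in> {..<j} then \<omega> x else False) (walk_steps p n) = walk_steps p j"
  unfolding walk_steps_def using assms by (intro Pi_pmf_subset[symmetric]) auto

lemma fst_walk_pos_restrict:
  assumes "m \<le> j"
  shows "fst (walk_pos (\<lambda>x. if x \<in> {..<j} then \<omega> x else False) m) = fst (walk_pos \<omega> m)"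
proof -
  have "{l. l < m \<and> (if l \<in> {..<j} then \<omega> l else False)} = {l. l < m \<and> \<omega> l}" using assms by auto
  then show ?thesis by (simp add: walk_pos_def)
qed

lemma walk_counts_distribution:
  assumes "i \<le> j" "j \<le> n" "0 \<le> p" "p \<le> 1"
  shows "map_pmf (\<lambda>\<omega>. (fst (walk_pos \<omega> i), fst (walk_pos \<omega> j) - fst (walk_pos \<omega> i))) (walk_steps p n) =
         pair_pmf (binomial_pmf i p) (binomial_pmf (j - i) p)"
proof -
  let ?B = "\<lambda>_::nat. bernoulli_pmf p"
  define counts where "counts = (\<lambda>\<omega>. (fst (walk_pos \<omega> i), fst (walk_pos \<omega> j) - fst (walk_pos \<omega> i)))"
  define merge where "merge = (\<lambda>(f, g) x. if x \<in> {..<i} then f x else g x :: bool)"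
  have counts_merge: "counts (merge fg) = (card {x\<in>{..<i}. fst fg x}, card {x\<in>{i..<j}. snd fg x})" for fg
  proof -
    obtain f g where fg: "fg = (f, g)" by fastforce
    have "{l. l < j \<and> merge fg l} = {x\<in>{..<i}. f x} \<union> {x\<in>{i..<j}. g x}"
      using assms(1) by (auto simp: merge_def fg)
    moreover have "{l. l < i \<and> merge fg l} = {x\<in>{..<i}. f x}" by (auto simp: merge_def fg)
    ultimately show ?thesis
      by (simp add: counts_def walk_pos_def fg card_Un_disjoint disjoint_iff)
  qed
  have "map_pmf counts (walk_steps p n) = map_pmf counts (walk_steps p j)"
    by (subst walk_steps_restrict[OF assms(2), symmetric])
      (simp only: pmf.map_comp o_def counts_def fst_walk_pos_restrict assms(1) order.refl)
  also have "walk_steps p j = Pi_pmf ({..<i} \<union> {i..<j}) False ?B"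
    using assms(1) by (simp add: walk_steps_def ivl_disj_un_one(2))
  also have "\<dots> = map_pmf merge (pair_pmf (Pi_pmf {..<i} False ?B) (Pi_pmf {i..<j} False ?B))"
    unfolding merge_def by (rule Pi_pmf_union) auto
  also have "map_pmf counts \<dots> = map_pmf (\<lambda>(f, g). (card {x\<in>{..<i}. f x}, card {x\<in>{i..<j}. g x}))
      (pair_pmf (Pi_pmf {..<i} False ?B) (Pi_pmf {i..<j} False ?B))"
    by (simp add: pmf.map_comp o_def counts_merge case_prod_unfold)
  also have "\<dots> = pair_pmf (binomial_pmf i p) (binomial_pmf (j - i) p)"
  proof -
    have "binomial_pmf i p = map_pmf (\<lambda>f. card {x\<in>{..<i}. f x}) (Pi_pmf {..<i} False ?B)"
      "binomial_pmf (j - i) p = map_pmf (\<lambda>g. card {x\<in>{i..<j}. g x}) (Pi_pmf {i..<j} False ?B)"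
      using assms(3,4) by (intro binomial_pmf_altdef'; simp)+
    then show ?thesis by (simp only: map_pair)
  qed
  finally show ?thesis by (simp add: counts_def)
qed

lemma expectation_walk_counts:
  assumes "i \<le> j" "j \<le> n" "0 \<le> p" "p \<le> 1"
  shows "measure_pmf.expectation (walk_steps p n)
      (\<lambda>\<omega>. G (fst (walk_pos \<omega> i)) (fst (walk_pos \<omega> j) - fst (walk_pos \<omega> i))) =
    (\<Sum>a\<le>i. \<Sum>b\<le>j - i. binomial_weight p i a * binomial_weight p (j - i) b * G a b)"
proof -
  let ?M = "pair_pmf (binomial_pmf i p) (binomial_pmf (j - i) p)"
  have "measure_pmf.expectation (walk_steps p n)
      (\<lambda>\<omega>. G (fst (walk_pos \<omega> i)) (fst (walk_pos \<omega> j) - fst (walk_pos \<omega> i))) =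
      measure_pmf.expectation ?M (\<lambda>(a, b). G a b)"
    by (simp flip: walk_counts_distribution[OF assms])
  also have "\<dots> = (\<Sum>ab\<in>{..i} \<times> {..j - i}. pmf ?M ab * (\<lambda>(a, b). G a b) ab)"
    using assms(3,4) by (subst integral_measure_pmf[of "{..i} \<times> {..j - i}"])
      (auto simp: set_pmf_binomial_eq split: if_splits)
  also have "\<dots> = (\<Sum>a\<le>i. \<Sum>b\<le>j - i. binomial_weight p i a * binomial_weight p (j - i) b * G a b)"
    using assms(3,4) by (simp add: sum.cartesian_product' pmf_pair binomial_weight_def)
  finally show ?thesis .
qed

lemma covariance_vis_ind_le:
  assumes p: "0 < p" "p < 1" and ij: "i < j" "j \<le> n"
  shows "\<bar>pmf_covariance (walk_steps p n) (\<lambda>\<omega>. vis_ind \<omega> i) (\<lambda>\<omega>. vis_ind \<omega> j)\<bar>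
    \<le> real (card {d. d dvd j}) * (8 / sqrt (2 * p * (1 - p) * real (j - i)))"
proof -
  define P where "P = binomial_weight p i"
  define Q where "Q = binomial_weight p (j - i)"
  define f where "f a = (of_bool (coprime a i) :: real)" for a
  define G where "G a b = (of_bool (coprime (a + b) j) :: real)" for a b
  have vis_ind_j: "vis_ind \<omega> j = G (fst (walk_pos \<omega> i)) (fst (walk_pos \<omega> j) - fst (walk_pos \<omega> i))" for \<omega>
    using fst_walk_pos_mono[of i j \<omega>] ij by (simp add: vis_ind_eq_coprime G_def)
  txt \<open>Given \<open>a\<^sub>i = a\<close>, the indicator \<open>X\<^sub>j\<close> has conditional mean \<open>binomial_coprime_prob p (j - i) j a\<close>,
    and the covariance is controlled by how much this varies with \<open>a\<close>.\<close>
  note expectation = expectation_walk_counts[of i j n p, folded P_def Q_def]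
  have "\<bar>pmf_covariance (walk_steps p n) (\<lambda>\<omega>. vis_ind \<omega> i) (\<lambda>\<omega>. vis_ind \<omega> j)\<bar> =
    \<bar>(\<Sum>a\<le>i. \<Sum>b\<le>j - i. P a * Q b * (f a * G a b)) -
      (\<Sum>a\<le>i. \<Sum>b\<le>j - i. P a * Q b * f a) * (\<Sum>a\<le>i. \<Sum>b\<le>j - i. P a * Q b * G a b)\<bar>"
    using ij p expectation[of "\<lambda>a b. f a * G a b"] expectation[of "\<lambda>a b. f a"] expectation[of G]
    by (simp add: pmf_covariance_def vis_ind_j vis_ind_eq_coprime[of _ i] f_def)
  also have "\<dots> \<le> real (card {d. d dvd j}) * (8 / sqrt (2 * p * (1 - p) * real (j - i)))"
  proof (rule abs_covariance_le_oscillation)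
    show "\<And>a. 0 \<le> P a" "sum P {..i} = 1" "sum Q {..j - i} = 1"
      using p by (simp_all add: P_def Q_def binomial_weight_nonneg sum_binomial_weight)
    show "\<And>a. 0 \<le> f a \<and> f a \<le> 1" by (simp add: f_def)
    fix a a'
    show "\<bar>(\<Sum>b\<le>j - i. Q b * G a b) - (\<Sum>b\<le>j - i. Q b * G a' b)\<bar>
        \<le> real (card {d. d dvd j}) * (8 / sqrt (2 * p * (1 - p) * real (j - i)))"
      using binomial_coprime_prob_oscillation[OF p, of j "j - i" a a'] ij
      by (simp add: binomial_coprime_prob_def Q_def G_def)
  qed
  finally show ?thesis .
qed

lemma card_multiples_le:
  assumes "0 < d" shows "real (card {j\<in>{1..n}. d dvd j}) \<le> real n / real d"
proof -
  have "{j\<in>{1..n}. d dvd j} \<subseteq> (\<lambda>m. d * m) ` {1..n div d}"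
  proof
    fix j assume j: "j \<in> {j\<in>{1..n}. d dvd j}"
    then obtain m where m: "j = d * m" by blast
    then have "1 \<le> m" using j by (cases m) auto
    moreover have "m \<le> n div d" using j m assms by (simp add: less_eq_div_iff_mult_less_eq mult.commute)
    ultimately show "j \<in> (\<lambda>m. d * m) ` {1..n div d}" using m by auto
  qed
  then have "card {j\<in>{1..n}. d dvd j} \<le> card ((\<lambda>m. d * m) ` {1..n div d})" by (intro card_mono) auto
  also have "\<dots> \<le> n div d" using card_image_le[of "{1..n div d}" "\<lambda>m. d * m"] by simp
  finally have "real (card {j\<in>{1..n}. d dvd j}) \<le> real (n div d)" by simp
  also have "\<dots> \<le> real n / real d" by (rule of_nat_div_le_of_nat)
  finally show ?thesis .
qed

lemma harm_le_one_plus_ln: "1 \<le> n \<Longrightarrow> harm n \<le> 1 + ln (real n)"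
  using euler_mascheroni_sequence_decreasing[of 1 n] by (simp add: harm_def)

lemma sum_divisor_count_le:
  assumes "1 \<le> n" shows "(\<Sum>j=1..n. real (card {d. d dvd j})) \<le> real n * (1 + ln (real n))"
proof -
  have "card {d. d dvd j} = card {d\<in>{1..n}. d dvd j}" if "j \<in> {1..n}" for j
    using that by (intro arg_cong[of _ _ card]) (auto dest: dvd_imp_le intro: Nat.gr0I)
  then have "(\<Sum>j=1..n. real (card {d. d dvd j})) = (\<Sum>j=1..n. \<Sum>d=1..n. of_bool (d dvd j))"
    by (simp add: sum.If_cases Int_def)
  also have "\<dots> = (\<Sum>d=1..n. real (card {j\<in>{1..n}. d dvd j}))"
    by (subst sum.swap) (simp add: sum.If_cases Int_def conj_commute)
  also have "\<dots> \<le> (\<Sum>d=1..n. real n / real d)"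
    by (intro sum_mono card_multiples_le) auto
  also have "\<dots> = real n * harm n"
    by (simp add: harm_def sum_distrib_left divide_inverse)
  also have "\<dots> \<le> real n * (1 + ln (real n))"
    using harm_le_one_plus_ln[OF assms] by (intro mult_left_mono) auto
  finally show ?thesis .
qed

lemma finite_set_pmf_walk_steps: "finite (set_pmf (walk_steps p n))"
  unfolding walk_steps_def by (subst set_Pi_pmf) auto

definition cov_majorant :: "real \<Rightarrow> nat \<Rightarrow> nat \<Rightarrow> real" where
  "cov_majorant p i j =
    (if i < j then real (card {d. d dvd j}) * (8 / sqrt (2 * p * (1 - p) * real (j - i))) else 0)"

lemma cov_majorant_nonneg: "0 < p \<Longrightarrow> p < 1 \<Longrightarrow> 0 \<le> cov_majorant p i j"
  by (simp add: cov_majorant_def)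

lemma abs_covariance_vis_ind_le_majorant:
  assumes p: "0 < p" "p < 1" and "i \<le> n" "j \<le> n"
  shows "\<bar>pmf_covariance (walk_steps p n) (\<lambda>\<omega>. vis_ind \<omega> i) (\<lambda>\<omega>. vis_ind \<omega> j)\<bar>
    \<le> of_bool (i = j) + cov_majorant p i j + cov_majorant p j i"
proof (cases i j rule: linorder_cases)
  case equal
  have "\<bar>pmf_covariance (walk_steps p n) (\<lambda>\<omega>. vis_ind \<omega> i) (\<lambda>\<omega>. vis_ind \<omega> j)\<bar> \<le> 1"
    by (rule abs_pmf_covariance_le_1) (simp_all add: vis_ind_def)
  then show ?thesis using equal cov_majorant_nonneg[OF p, of j j] by simp
next
  case less
  then show ?thesis
    using covariance_vis_ind_le[OF p less] assms cov_majorant_nonneg[OF p, of j i]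
    by (simp add: cov_majorant_def)
next
  case greater
  then show ?thesis
    using covariance_vis_ind_le[OF p greater] assms cov_majorant_nonneg[OF p, of i j]
    by (simp add: cov_majorant_def pmf_covariance_def mult.commute)
qed

lemma sum_cov_majorant_le:
  assumes "0 < p" "p < 1" "j \<le> n"
  shows "(\<Sum>i=1..n. cov_majorant p i j)
    \<le> real (card {d. d dvd j}) * (8 / sqrt (2 * p * (1 - p))) * (2 * sqrt (real n))"
proof -
  define c where "c = real (card {d. d dvd j}) * (8 / sqrt (2 * p * (1 - p)))"
  have c: "0 \<le> c" using assms by (simp add: c_def)
  have "(\<Sum>i\<in>{1..<j}. 1 / sqrt (real (j - i))) = (\<Sum>t\<in>{1..<j}. 1 / sqrt (real t))"
    using sum.atLeastLessThan_rev[of "\<lambda>t. 1 / sqrt (real t)" 1 j] by simp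
  also have "\<dots> \<le> (\<Sum>t=1..n. 1 / sqrt (real t))"
    using assms by (intro sum_mono2) auto
  also have "\<dots> \<le> 2 * sqrt (real n)" by (rule sum_inverse_sqrt_le)
  finally have column: "(\<Sum>i\<in>{1..<j}. 1 / sqrt (real (j - i))) \<le> 2 * sqrt (real n)" .
  have "(\<Sum>i=1..n. cov_majorant p i j) = c * (\<Sum>i\<in>{1..<j}. 1 / sqrt (real (j - i)))"
    using assms by (simp add: cov_majorant_def c_def sum.If_cases sum_distrib_left Int_def real_sqrt_mult)
      (intro sum.cong; auto)
  also have "\<dots> \<le> c * (2 * sqrt (real n))" using column c by (rule mult_left_mono)
  finally show ?thesis by (simp add: c_def)
qed

lemma variance_visible_count_le:
  assumes p: "0 < p" "p < 1" and n: "1 \<le> n"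
  defines "K \<equiv> 8 / sqrt (2 * p * (1 - p))"
  shows "measure_pmf.variance (walk_steps p n) (\<lambda>\<omega>. \<Sum>i=1..n. vis_ind \<omega> i)
    \<le> real n + 4 * K * real n powr (3/2) * (1 + ln (real n))"
proof -
  define \<tau> where "\<tau> j = real (card {d. d dvd j})" for j :: nat
  have "measure_pmf.variance (walk_steps p n) (\<lambda>\<omega>. \<Sum>i=1..n. vis_ind \<omega> i) =
      (\<Sum>i=1..n. \<Sum>j=1..n. pmf_covariance (walk_steps p n) (\<lambda>\<omega>. vis_ind \<omega> i) (\<lambda>\<omega>. vis_ind \<omega> j))"
    by (rule variance_sum_eq_sum_covariance[OF finite_set_pmf_walk_steps]) simp
  also have "\<dots> \<le> (\<Sum>i=1..n. \<Sum>j=1..n. of_bool (i = j) + cov_majorant p i j + cov_majorant p j i)"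
    using abs_covariance_vis_ind_le_majorant[OF p] by (intro sum_mono) (force simp: abs_le_iff)
  also have "\<dots> = real n + 2 * (\<Sum>j=1..n. \<Sum>i=1..n. cov_majorant p i j)"
    by (simp add: sum.distrib sum.swap[of "cov_majorant p"] of_bool_def)
  also have "\<dots> \<le> real n + 2 * (\<Sum>j=1..n. \<tau> j * K * (2 * sqrt (real n)))"
    using sum_cov_majorant_le[OF p] by (intro add_left_mono mult_left_mono sum_mono) (auto simp: \<tau>_def K_def)
  also have "\<dots> = real n + 4 * K * sqrt (real n) * (\<Sum>j=1..n. \<tau> j)"
    by (simp add: sum_distrib_left sum_distrib_right mult_ac)
  also have "\<dots> \<le> real n + 4 * K * sqrt (real n) * (real n * (1 + ln (real n)))"
    using sum_divisor_count_le[OF n] p unfolding \<tau>_def K_def by (intro add_left_mono mult_left_mono) auto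
  also have "\<dots> = real n + 4 * K * real n powr (3/2) * (1 + ln (real n))"
    using n by (simp add: powr_add[of _ 1 "1/2", simplified] powr_half_sqrt mult_ac)
  finally show ?thesis .
qed

theorem proposition2:
  fixes \<alpha> :: real
  assumes "0 < \<alpha>" and "\<alpha> < 1"
  shows "\<exists>C>0. \<forall>n::nat\<ge>2.
           measure_pmf.variance (walk_steps \<alpha> n) (\<lambda>\<omega>. \<Sum>i=1..n. vis_ind \<omega> i)
             \<le> C * real n powr (3/2) * ln (real n)"
proof -
  define K where "K = 8 / sqrt (2 * \<alpha> * (1 - \<alpha>))"
  define C where "C = 1 / ln 2 + 4 * K * (1 / ln 2 + 1)"
  have K: "0 < K" using assms by (simp add: K_def)
  show ?thesis
  proof (intro exI[of _ C] conjI allI impI)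
    show "0 < C" using K by (simp add: C_def add_pos_pos)
    fix n :: nat assume n: "2 \<le> n"
    define N where "N = real n powr (3/2)"
    define L where "L = ln (real n)"
    have ln_ratio: "1 \<le> L / ln 2" using n by (simp add: L_def)
    have "real n powr 1 \<le> N" unfolding N_def using n by (intro powr_mono) auto
    then have "real n \<le> N" by simp
    then have "real n \<le> N * (L / ln 2)" using ln_ratio mult_mono[of "real n" N 1 "L / ln 2"] by simp
    moreover have "4 * K * N * (1 + L) \<le> 4 * K * N * (L / ln 2 + L)"
      using ln_ratio K by (intro mult_left_mono) (auto simp: N_def)
    moreover have "C * N * L = N * (L / ln 2) + 4 * K * N * (L / ln 2 + L)"
      by (simp add: C_def ring_distribs mult_ac)
    ultimately have "real n + 4 * K * N * (1 + L) \<le> C * N * L" by linarith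
    then show "measure_pmf.variance (walk_steps \<alpha> n) (\<lambda>\<omega>. \<Sum>i=1..n. vis_ind \<omega> i) \<le> C * real n powr (3/2) * ln (real n)"
      using variance_visible_count_le[OF assms, of n] n unfolding K_def N_def L_def by simp
  qed
qed

end
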